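(* There is a functor $E:\mathbf{FinGraph}^<_\star\to\mathbf{FinLoset}$ that linearly orders the vertices of a given graph according to the ordering on the neighborhood of its distinguished point: for $G$ with distinguished point $v_0$, $E(G)$ is the set $\{v_0\}\cup\{u : v_0\to u\}$ with $v_0$ least and, for $u,v\neq v_0$, $u<v$ iff $v_0\to u\triangleleft v_0\to v$; and for a morphism $h$, $E(h)(v)=h(v)$.
   Context: A (directed) graph is $(V,\to)$ with $\to\subseteq V\times V$; $N(u)$ is the set of outgoing edges of $u$. A pointed graph has a distinguished vertex $v_0$; connected means every vertex is reachable by a path from $v_0$. A finite edge-ordered graph is a finite graph with a strict linear order $\triangleleft$ on each neighborhood. A homomorphism of finite pointed edge-ordered graphs $h:G\to H$ is a vertex map with (i) $u\to v$ implies $h(u)\to h(v)$; (ii) the distinguished vertex of $G$ is the unique vertex mapped to the distinguished vertex of $H$; (iii) $u\to v_1\triangleleft u\to v_2$ implies $h(u)\to h(v_1)\triangleleft h(u)\to h(v_2)$. $\mathbf{FinGraph}^<_\star$ is the category of connected, finite, pointed, edge-ordered graphs with such homomorphisms; $\mathbf{FinLoset}$ is the category of finite linearly ordered sets with monotone functions. *)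

theory Defs
  imports Main "HOL-Library.FuncSet"
begin

text \<open>A pointed edge-ordered graph: vertex set, edge relation, distinguished vertex,
  and for each vertex u a relation eord u v1 v2 meaning (u->v1) is before (u->v2).\<close>
record 'a peo_graph =
  verts :: "'a set"
  arcs  :: "'a rel"
  root  :: 'a
  eord  :: "'a \<Rightarrow> 'a \<Rightarrow> 'a \<Rightarrow> bool"

definition nbhd :: "'a peo_graph \<Rightarrow> 'a \<Rightarrow> 'a set" where
  "nbhd G u = {v. (u, v) \<in> arcs G}"

definition strict_linear_on :: "'a set \<Rightarrow> ('a \<Rightarrow> 'a \<Rightarrow> bool) \<Rightarrow> bool" where
  "strict_linear_on A r \<longleftrightarrow>
     (\<forall>x\<in>A. \<not> r x x) \<and>
     (\<forall>x\<in>A. \<forall>y\<in>A. \<forall>z\<in>A. r x y \<longrightarrow> r y z \<longrightarrow> r x z) \<and>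
     (\<forall>x\<in>A. \<forall>y\<in>A. x \<noteq> y \<longrightarrow> r x y \<or> r y x)"

definition fin_graph :: "'a peo_graph \<Rightarrow> bool" where
  "fin_graph G \<longleftrightarrow>
     finite (verts G) \<and> arcs G \<subseteq> verts G \<times> verts G \<and> root G \<in> verts G \<and>
     (\<forall>v\<in>verts G. (root G, v) \<in> (arcs G)\<^sup>*) \<and>
     (\<forall>u\<in>verts G. strict_linear_on (nbhd G u) (eord G u) \<and>
        (\<forall>v1 v2. eord G u v1 v2 \<longrightarrow> v1 \<in> nbhd G u \<and> v2 \<in> nbhd G u))"

definition graph_hom :: "'a peo_graph \<Rightarrow> 'b peo_graph \<Rightarrow> ('a \<Rightarrow> 'b) \<Rightarrow> bool" where
  "graph_hom G H h \<longleftrightarrow>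
     fin_graph G \<and> fin_graph H \<and>
     (\<forall>v\<in>verts G. h v \<in> verts H) \<and>
     (\<forall>u v. (u, v) \<in> arcs G \<longrightarrow> (h u, h v) \<in> arcs H) \<and>
     (\<forall>v\<in>verts G. h v = root H \<longleftrightarrow> v = root G) \<and>
     (\<forall>u v1 v2. (u, v1) \<in> arcs G \<longrightarrow> (u, v2) \<in> arcs G \<longrightarrow> eord G u v1 v2 \<longrightarrow>
          eord H (h u) (h v1) (h v2))"

definition E_obj :: "'a peo_graph \<Rightarrow> 'a set" where
  "E_obj G = insert (root G) (nbhd G (root G))"

definition E_less :: "'a peo_graph \<Rightarrow> 'a \<Rightarrow> 'a \<Rightarrow> bool" where
  "E_less G x y \<longleftrightarrow>
     (x = root G \<and> y \<noteq> root G) \<or>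
     (x \<noteq> root G \<and> y \<noteq> root G \<and> eord G (root G) x y)"

definition E_mor :: "'a peo_graph \<Rightarrow> ('a \<Rightarrow> 'b) \<Rightarrow> ('a \<Rightarrow> 'b)" where
  "E_mor G h = restrict h (E_obj G)"

end

theory Submission
  imports Defs
begin

text \<open>The order on E(G) is the edge order at the root with the root adjoined as a new bottom
  element, so it is linear because the edge order is. A homomorphism maps the root, and only the root, to
  the root, sends out-edges of the root to out-edges of the root and preserves their order; hence
  it even preserves the strict order on E. Functoriality is immediate since E(h) is a
  restriction of h.\<close>

lemma strict_linear_on_insert_bottom:
  assumes "strict_linear_on A r"
  shows "strict_linear_on (insert a A) (\<lambda>x y. (x = a \<and> y \<noteq> a) \<or> (x \<noteq> a \<and> y \<noteq> a \<and> r x y))"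
    (is "strict_linear_on _ ?less")
proof -
  have irrefl: "\<forall>x\<in>A. \<not> r x x"
    and trans: "\<forall>x\<in>A. \<forall>y\<in>A. \<forall>z\<in>A. r x y \<longrightarrow> r y z \<longrightarrow> r x z"
    and total: "\<forall>x\<in>A. \<forall>y\<in>A. x \<noteq> y \<longrightarrow> r x y \<or> r y x"
    using assms unfolding strict_linear_on_def by blast+
  show ?thesis
    unfolding strict_linear_on_def
  proof (intro conjI ballI impI)
    fix x y z
    assume "x \<in> insert a A" "y \<in> insert a A" "z \<in> insert a A"
    then show "\<not> ?less x x"
      and "?less x y \<Longrightarrow> ?less y z \<Longrightarrow> ?less x z"
      and "x \<noteq> y \<Longrightarrow> ?less x y \<or> ?less y x"
      using irrefl trans total by blast+
  qed
qed

lemma E_less_eq_insert_bottom: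
  "E_less G = (\<lambda>x y. (x = root G \<and> y \<noteq> root G) \<or>
                      (x \<noteq> root G \<and> y \<noteq> root G \<and> eord G (root G) x y))"
  by (simp add: E_less_def fun_eq_iff)

lemma fin_graph_E_obj_subset_verts:
  assumes "fin_graph G"
  shows "E_obj G \<subseteq> verts G"
  using assms unfolding fin_graph_def E_obj_def nbhd_def by auto

lemma fin_graph_E_obj_finite:
  assumes "fin_graph G"
  shows "finite (E_obj G)"
  using fin_graph_E_obj_subset_verts[OF assms] assms
  by (auto simp: fin_graph_def intro: finite_subset)

lemma fin_graph_E_less_strict_linear:
  assumes "fin_graph G"
  shows "strict_linear_on (E_obj G) (E_less G)"
proof -
  have "strict_linear_on (nbhd G (root G)) (eord G (root G))"
    using assms unfolding fin_graph_def by blast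
  then show ?thesis
    unfolding E_obj_def E_less_eq_insert_bottom by (rule strict_linear_on_insert_bottom)
qed

lemma E_objE:
  assumes "x \<in> E_obj G"
  obtains "x = root G" | "x \<noteq> root G" "(root G, x) \<in> arcs G"
  using assms unfolding E_obj_def nbhd_def by auto

lemma graph_hom_root:
  assumes "graph_hom G H h"
  shows "h (root G) = root H"
  using assms unfolding graph_hom_def fin_graph_def by blast

lemma graph_hom_maps_E_obj:
  assumes "graph_hom G H h" "x \<in> E_obj G"
  shows "h x \<in> E_obj H"
  using assms(2)
proof (cases rule: E_objE)
  case 2
  then have "(h (root G), h x) \<in> arcs H" using assms(1) unfolding graph_hom_def by blast
  then show ?thesis by (simp add: graph_hom_root[OF assms(1)] E_obj_def nbhd_def)
qed (simp add: graph_hom_root[OF assms(1)] E_obj_def)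

lemma graph_hom_preserves_E_less:
  assumes hom: "graph_hom G H h" and x: "x \<in> E_obj G" and y: "y \<in> E_obj G"
    and xy: "E_less G x y"
  shows "E_less H (h x) (h y)"
proof -
  have G: "fin_graph G" using hom unfolding graph_hom_def by blast
  have reflects_root: "v \<in> verts G \<Longrightarrow> h v = root H \<longleftrightarrow> v = root G" for v
    using hom unfolding graph_hom_def by blast
  have "x \<in> verts G" "y \<in> verts G" using x y fin_graph_E_obj_subset_verts[OF G] by auto
  note roots = this[THEN reflects_root]
  have "y \<noteq> root G" using xy unfolding E_less_def by blast
  then have y_arc: "(root G, y) \<in> arcs G" using y by (auto elim: E_objE)
  from x show ?thesis
  proof (cases rule: E_objE)
    case 1
    then show ?thesis using roots \<open>y \<noteq> root G\<close> unfolding E_less_def by simp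
  next
    case 2
    then have "eord G (root G) x y" using xy unfolding E_less_def by blast
    then have "eord H (h (root G)) (h x) (h y)"
      using hom 2 y_arc unfolding graph_hom_def by blast
    then show ?thesis
      using roots 2 \<open>y \<noteq> root G\<close> graph_hom_root[OF hom] unfolding E_less_def by simp
  qed
qed

lemma E_mor_in_extensional_funcset:
  assumes "graph_hom G H h"
  shows "E_mor G h \<in> E_obj G \<rightarrow>\<^sub>E E_obj H"
  using graph_hom_maps_E_obj[OF assms] unfolding E_mor_def by auto

lemma E_mor_comp:
  assumes "graph_hom G H h"
  shows "E_mor G (g \<circ> h) = compose (E_obj G) (E_mor H g) (E_mor G h)"
  using graph_hom_maps_E_obj[OF assms] unfolding E_mor_def compose_def by (auto intro!: ext)

theorem lemma9p3:
  shows
  "(\<forall>G :: 'a peo_graph. fin_graph G \<longrightarrow>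
       finite (E_obj G) \<and> strict_linear_on (E_obj G) (E_less G)) \<and>
   (\<forall>(G :: 'a peo_graph) (H :: 'b peo_graph) h. graph_hom G H h \<longrightarrow>
       E_mor G h \<in> E_obj G \<rightarrow>\<^sub>E E_obj H \<and>
       (\<forall>x\<in>E_obj G. \<forall>y\<in>E_obj G. (E_less G x y \<or> x = y) \<longrightarrow>
          (E_less H (E_mor G h x) (E_mor G h y) \<or> E_mor G h x = E_mor G h y))) \<and>
   (\<forall>G :: 'a peo_graph. fin_graph G \<longrightarrow> E_mor G id = restrict id (E_obj G)) \<and>
   (\<forall>(G :: 'a peo_graph) (H :: 'b peo_graph) (K :: 'c peo_graph) h g.
       graph_hom G H h \<longrightarrow> graph_hom H K g \<longrightarrow>
       E_mor G (g \<circ> h) = compose (E_obj G) (E_mor H g) (E_mor G h))"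
proof (intro conjI allI impI)
  fix G :: "'a peo_graph"
  assume "fin_graph G"
  then show "finite (E_obj G)" "strict_linear_on (E_obj G) (E_less G)"
    by (rule fin_graph_E_obj_finite, rule fin_graph_E_less_strict_linear)
  show "E_mor G id = restrict id (E_obj G)"
    by (simp add: E_mor_def)
next
  fix G :: "'a peo_graph" and H :: "'b peo_graph" and h
  assume hom: "graph_hom G H h"
  then show "E_mor G h \<in> E_obj G \<rightarrow>\<^sub>E E_obj H"
    by (rule E_mor_in_extensional_funcset)
  show "\<forall>x\<in>E_obj G. \<forall>y\<in>E_obj G. (E_less G x y \<or> x = y) \<longrightarrow>
          (E_less H (E_mor G h x) (E_mor G h y) \<or> E_mor G h x = E_mor G h y)"
    using graph_hom_preserves_E_less[OF hom] by (auto simp: E_mor_def)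
next
  fix G :: "'a peo_graph" and H :: "'b peo_graph" and K :: "'c peo_graph" and h g
  assume "graph_hom G H h"
  then show "E_mor G (g \<circ> h) = compose (E_obj G) (E_mor H g) (E_mor G h)"
    by (rule E_mor_comp)
qed

end
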